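(* For any formulas $A$ and $B$, each of the following rules (with $\Gamma,\Delta$ arbitrary finite multisets of formulas) is strongly admissible in $\mathsf{Grz}_\infty+\mathsf{cut}$: $\mathsf{li}_{A\to B}$: from $\Gamma,A\to B\Rightarrow\Delta$ infer $\Gamma,B\Rightarrow\Delta$; $\mathsf{ri}_{A\to B}$: from $\Gamma,A\to B\Rightarrow\Delta$ infer $\Gamma\Rightarrow A,\Delta$; $\mathsf{i}_{A\to B}$: from $\Gamma\Rightarrow A\to B,\Delta$ infer $\Gamma,A\Rightarrow B,\Delta$; $\mathsf{i}_\bot$: from $\Gamma\Rightarrow\bot,\Delta$ infer $\Gamma\Rightarrow\Delta$; $\mathsf{li}_{\Box A}$: from $\Gamma\Rightarrow\Box A,\Delta$ infer $\Gamma\Rightarrow A,\Delta$.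
   Context: Formulas are built from $\bot$ and atoms by $\to$ and $\Box$; sequents $\Gamma\Rightarrow\Delta$ have finite multisets of formulas on each side; $\Box\Pi$ denotes $\{\Box B:B\in\Pi\}$. The calculus $\mathsf{Grz}_\infty+\mathsf{cut}$ has initial sequents $\Gamma,p\Rightarrow p,\Delta$ ($p$ atomic), $\Gamma,\bot\Rightarrow\Delta$, and rules $(\to_L)$ from $\Gamma,B\Rightarrow\Delta$ and $\Gamma\Rightarrow A,\Delta$ infer $\Gamma,A\to B\Rightarrow\Delta$; $(\to_R)$ from $\Gamma,A\Rightarrow B,\Delta$ infer $\Gamma\Rightarrow A\to B,\Delta$; $(\mathsf{refl})$ from $\Gamma,B,\Box B\Rightarrow\Delta$ infer $\Gamma,\Box B\Rightarrow\Delta$; $(\Box)$ from left premise $\Gamma,\Box\Pi\Rightarrow A,\Delta$ and right premise $\Box\Pi\Rightarrow A$ infer $\Gamma,\Box\Pi\Rightarrow\Box A,\Delta$; $(\mathsf{cut})$ from $\Gamma\Rightarrow A,\Delta$ and $\Gamma,A\Rightarrow\Delta$ infer $\Gamma\Rightarrow\Delta$. An $\infty$-proof is a possibly infinite tree of sequents built by these rules with leaves labelled by initial sequents, in which every infinite branch passes through a right premise of $(\Box)$ infinitely often; $\mathcal P$ is the set of all $\infty$-proofs. The $n$-fragment of an $\infty$-proof is the finite tree obtained by cutting every branch at the $n$-th (from the root) right premise of $(\Box)$; the main fragment is the $1$-fragment; the local height $|\pi|$ is the length of the longest branch of the main fragment (an $\infty$-proof consisting only of an initial sequent has height $0$). Write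 $\pi\sim_n\tau$ if the $n$-fragments of $\pi,\tau$ coincide, and $\pi\sim_0\tau$ always. $\mathcal P_n$ is the set of $\infty$-proofs with no application of $(\mathsf{cut})$ in their $n$-fragment, and $\mathcal P_0=\mathcal P$. A single-premise rule is strongly admissible in $\mathsf{Grz}_\infty+\mathsf{cut}$ if there is a mapping $\mathsf u:\mathcal P\to\mathcal P$ such that: (i) $\mathsf u$ is non-expansive: $\pi\sim_n\pi'$ implies $\mathsf u(\pi)\sim_n\mathsf u(\pi')$ for all $n$; (ii) $\mathsf u$ is adequate: $\pi\in\mathcal P_n$ implies $\mathsf u(\pi)\in\mathcal P_n$ for all $n$; (iii) $|\mathsf u(\pi)|\le|\pi|$ for all $\pi\in\mathcal P$; (iv) for every instance of the rule, $\mathsf u$ maps every $\infty$-proof of its premise to an $\infty$-proof of its conclusion. *)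

theory Defs
  imports Main "HOL-Library.Multiset" "HOL-Library.Extended_Nat"
begin

datatype fm = Bot | At nat | Imp fm fm | Box fm

type_synonym sequent = "fm multiset \<times> fm multiset"

text \<open>RBox Pi A denotes the box rule with principal formula Box A and
  boxed context Box Pi; its premise with index 0 is the left premise and index 1 the right one.\<close>
datatype rl = RAx | RBotL | RImpL fm fm | RImpR fm fm | RRefl fm | RBox "fm multiset" fm | RCut fm

codatatype ptree = PNode (pseq: sequent) (prule: rl) (psubs: "ptree list")

fun step :: "sequent \<Rightarrow> rl \<Rightarrow> sequent list \<Rightarrow> bool" where
  "step (L, R) RAx ps = (ps = [] \<and> (\<exists>p. At p \<in># L \<and> At p \<in># R))"
| "step (L, R) RBotL ps = (ps = [] \<and> Bot \<in># L)"
| "step (L, R) (RImpL A B) ps = (Imp A B \<in># L \<and>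
      ps = [(L - {#Imp A B#} + {#B#}, R), (L - {#Imp A B#}, R + {#A#})])"
| "step (L, R) (RImpR A B) ps = (Imp A B \<in># R \<and>
      ps = [(L + {#A#}, R - {#Imp A B#} + {#B#})])"
| "step (L, R) (RRefl B) ps = (Box B \<in># L \<and> ps = [(L + {#B#}, R)])"
| "step (L, R) (RBox Pi A) ps = (image_mset Box Pi \<subseteq># L \<and> Box A \<in># R \<and>
      ps = [(L, R - {#Box A#} + {#A#}), (image_mset Box Pi, {#A#})])"
| "step (L, R) (RCut A) ps = (ps = [(L, R + {#A#}), (L + {#A#}, R)])"

definition rbox :: "ptree \<Rightarrow> nat \<Rightarrow> bool" where
  "rbox t i \<longleftrightarrow> (\<exists>Pi A. prule t = RBox Pi A) \<and> i = 1"

definition is_cut :: "rl \<Rightarrow> bool" where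
  "is_cut r \<longleftrightarrow> (\<exists>A. r = RCut A)"

inductive_set nodes :: "ptree \<Rightarrow> ptree set" for t where
  "t \<in> nodes t"
| "s \<in> nodes t \<Longrightarrow> u \<in> set (psubs s) \<Longrightarrow> u \<in> nodes t"

primrec walk :: "ptree \<Rightarrow> (nat \<Rightarrow> nat) \<Rightarrow> nat \<Rightarrow> ptree" where
  "walk t f 0 = t"
| "walk t f (Suc k) = psubs (walk t f k) ! f k"

definition is_branch :: "ptree \<Rightarrow> (nat \<Rightarrow> nat) \<Rightarrow> bool" where
  "is_branch t f \<longleftrightarrow> (\<forall>k. f k < length (psubs (walk t f k)))"

definition is_proof :: "ptree \<Rightarrow> bool" where
  "is_proof t \<longleftrightarrow>
     (\<forall>s\<in>nodes t. step (pseq s) (prule s) (map pseq (psubs s))) \<and>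
     (\<forall>f. is_branch t f \<longrightarrow> (\<exists>\<^sub>\<infinity>k. rbox (walk t f k) (f k)))"

definition Proofs :: "ptree set" where
  "Proofs = {t. is_proof t}"

text \<open>frag n t s: s is a node of the n-fragment of t at which a rule is applied
  (i.e. reached passing fewer than n right premises of (Box)).\<close>
inductive frag :: "nat \<Rightarrow> ptree \<Rightarrow> ptree \<Rightarrow> bool" where
  "frag (Suc n) t t"
| "i < length (psubs t) \<Longrightarrow> \<not> rbox t i \<Longrightarrow> frag (Suc n) (psubs t ! i) s \<Longrightarrow> frag (Suc n) t s"
| "i < length (psubs t) \<Longrightarrow> rbox t i \<Longrightarrow> frag n (psubs t ! i) s \<Longrightarrow> frag (Suc n) t s"

definition Pn :: "nat \<Rightarrow> ptree set" where
  "Pn n = {t \<in> Proofs. \<forall>s. frag n t s \<longrightarrow> \<not> is_cut (prule s)}"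

text \<open>agree n t u: the n-fragments of t and u coincide (agree 0 always holds).\<close>
coinductive agree :: "nat \<Rightarrow> ptree \<Rightarrow> ptree \<Rightarrow> bool" where
  "agree 0 t u"
| "pseq t = pseq u \<Longrightarrow> prule t = prule u \<Longrightarrow> map pseq (psubs t) = map pseq (psubs u) \<Longrightarrow>
   (\<forall>i < length (psubs t). agree (if rbox t i then n else Suc n) (psubs t ! i) (psubs u ! i)) \<Longrightarrow>
   agree (Suc n) t u"

text \<open>Branches of the main fragment (right premises of (Box) occur as leaves).\<close>
inductive mbranch :: "ptree \<Rightarrow> nat \<Rightarrow> bool" where
  "mbranch t 0"
| "i < length (psubs t) \<Longrightarrow> \<not> rbox t i \<Longrightarrow> mbranch (psubs t ! i) k \<Longrightarrow> mbranch t (Suc k)"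
| "i < length (psubs t) \<Longrightarrow> rbox t i \<Longrightarrow> mbranch t (Suc 0)"

definition local_height :: "ptree \<Rightarrow> enat" where
  "local_height t = Sup {enat k | k. mbranch t k}"

text \<open>A single-premise rule is given as the set of its instances (premise, conclusion).\<close>
definition strongly_admissible :: "(sequent \<times> sequent) set \<Rightarrow> bool" where
  "strongly_admissible R \<longleftrightarrow> (\<exists>u :: ptree \<Rightarrow> ptree.
     (\<forall>t\<in>Proofs. u t \<in> Proofs) \<and>
     (\<forall>n t t'. t \<in> Proofs \<longrightarrow> t' \<in> Proofs \<longrightarrow> agree n t t' \<longrightarrow> agree n (u t) (u t')) \<and>
     (\<forall>n t. t \<in> Pn n \<longrightarrow> u t \<in> Pn n) \<and>
     (\<forall>t\<in>Proofs. local_height (u t) \<le> local_height t) \<and>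
     (\<forall>(prem, concl) \<in> R. \<forall>t\<in>Proofs. pseq t = prem \<longrightarrow> pseq (u t) = concl))"

definition li_imp :: "fm \<Rightarrow> fm \<Rightarrow> (sequent \<times> sequent) set" where
  "li_imp A B = {((G + {#Imp A B#}, D), (G + {#B#}, D)) | G D. True}"

definition ri_imp :: "fm \<Rightarrow> fm \<Rightarrow> (sequent \<times> sequent) set" where
  "ri_imp A B = {((G + {#Imp A B#}, D), (G, {#A#} + D)) | G D. True}"

definition i_imp :: "fm \<Rightarrow> fm \<Rightarrow> (sequent \<times> sequent) set" where
  "i_imp A B = {((G, {#Imp A B#} + D), (G + {#A#}, {#B#} + D)) | G D. True}"

definition i_bot :: "(sequent \<times> sequent) set" where
  "i_bot = {((G, {#Bot#} + D), (G, D)) | G D. True}"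

definition li_box :: "fm \<Rightarrow> (sequent \<times> sequent) set" where
  "li_box A = {((G, {#Box A#} + D), (G, {#A#} + D)) | G D. True}"

end

theory Submission
  imports Defs "HOL-Library.Infinite_Set"
begin

text \<open>Each rule inverts a rule R of the calculus. Transform every sequent of a proof as the
  rule prescribes, keeping all rules in place, and wherever R itself introduces the inverted
  formula, drop that R-step and continue with its premise that already is the transformed sequent.
  The transformation only touches side formulas, so right premises of (Box), whose sequent has no
  side formulas, are left unchanged together with the whole subproof above them. Hence the
  transformed tree differs from the given proof only in its main fragment: rules, cuts and
  fragments are preserved, the main fragment can only get shorter, and every infinite branch
  eventually enters an unchanged subproof of the original proof.\<close>

lemma INFM_nat_shift: "(\<exists>\<^sub>\<infinity>k. Q (k + m)) \<longleftrightarrow> (\<exists>\<^sub>\<infinity>k::nat. Q k)"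
  using eventually_sequentially_seg[of "\<lambda>k. \<not> Q k" m]
  by (simp add: frequently_def cofinite_eq_sequentially)

lemma nodes_trans: "x \<in> nodes s \<Longrightarrow> s \<in> nodes t \<Longrightarrow> x \<in> nodes t"
  by (induction rule: nodes.induct) (auto intro: nodes.intros)

lemma child_in_nodes: "i < length (psubs t) \<Longrightarrow> psubs t ! i \<in> nodes t"
  by (meson nodes.intros nth_mem)

lemma walk_add: "walk t f (m + k) = walk (walk t f m) (\<lambda>i. f (m + i)) k"
  by (induction k) auto

lemma is_branch_walk: "is_branch t f \<Longrightarrow> is_branch (walk t f m) (\<lambda>i. f (m + i))"
  unfolding is_branch_def by (metis walk_add)

lemma walk_in_nodes: "(\<forall>k'<k. f k' < length (psubs (walk t f k'))) \<Longrightarrow> walk t f k \<in> nodes t"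
  by (induction k) (auto intro: nodes.intros)

lemma mbranch_Suc_imp: "mbranch t (Suc k) \<Longrightarrow> mbranch t k"
proof (induction t "Suc k" arbitrary: k rule: mbranch.induct)
  case (2 i t k)
  then show ?case by (cases k) (auto intro: mbranch.intros)
qed (auto intro: mbranch.intros)

lemma map_pseq_nth:
  "map pseq xs = map pseq ys \<Longrightarrow> i < length xs \<Longrightarrow> pseq (xs ! i) = pseq (ys ! i)"
  by (metis length_map nth_map)

lemma frag_nonbox_child:
  "frag n (psubs t ! i) s \<Longrightarrow> i < length (psubs t) \<Longrightarrow> \<not> rbox t i \<Longrightarrow> frag n t s"
  by (cases rule: frag.cases) (auto intro: frag.intros)

lemma mbranch_nonbox_child:
  "mbranch (psubs t ! i) k \<Longrightarrow> i < length (psubs t) \<Longrightarrow> \<not> rbox t i \<Longrightarrow> mbranch t k"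
  by (meson mbranch.intros(2) mbranch_Suc_imp)

lemma agree_SucD:
  assumes "agree (Suc m) t u"
  shows "pseq t = pseq u" "prule t = prule u" "map pseq (psubs t) = map pseq (psubs u)"
    "length (psubs t) = length (psubs u)"
    "\<And>i. i < length (psubs t) \<Longrightarrow> agree (if rbox t i then m else Suc m) (psubs t ! i) (psubs u ! i)"
  using assms map_eq_imp_length_eq by (cases rule: agree.cases; blast)+

definition locally_correct :: "ptree \<Rightarrow> bool" where
  "locally_correct t \<longleftrightarrow> (\<forall>s\<in>nodes t. step (pseq s) (prule s) (map pseq (psubs s)))"

definition progressive :: "ptree \<Rightarrow> bool" where
  "progressive t \<longleftrightarrow> (\<forall>f. is_branch t f \<longrightarrow> (\<exists>\<^sub>\<infinity>k. rbox (walk t f k) (f k)))"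

lemma Proofs_iff: "t \<in> Proofs \<longleftrightarrow> locally_correct t \<and> progressive t"
  by (simp add: Proofs_def is_proof_def locally_correct_def progressive_def)

lemma locally_correct_node: "locally_correct t \<Longrightarrow> s \<in> nodes t \<Longrightarrow> locally_correct s"
  unfolding locally_correct_def using nodes_trans by blast

lemma locally_correct_step:
  "locally_correct t \<Longrightarrow> step (pseq t) (prule t) (map pseq (psubs t))"
  unfolding locally_correct_def using nodes.intros(1) by blast

lemma progressive_child:
  assumes "progressive t" "i < length (psubs t)"
  shows "progressive (psubs t ! i)"
  unfolding progressive_def
proof (intro allI impI)
  fix f assume branch: "is_branch (psubs t ! i) f"
  define g where "g = case_nat i f"
  have walk_g: "walk t g (k + 1) = walk (psubs t ! i) f k" for k
    using walk_add[of t g 1 k] by (simp add: g_def)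
  have "is_branch t g"
    unfolding is_branch_def
  proof
    fix k show "g k < length (psubs (walk t g k))"
      using branch assms(2) walk_g unfolding is_branch_def g_def by (cases k) auto
  qed
  then have "\<exists>\<^sub>\<infinity>k. rbox (walk t g k) (g k)"
    using assms(1) progressive_def by blast
  then have "\<exists>\<^sub>\<infinity>k. rbox (walk t g (k + 1)) (g (k + 1))"
    by (simp only: INFM_nat_shift[of "\<lambda>k. rbox (walk t g k) (g k)" 1])
  then show "\<exists>\<^sub>\<infinity>k. rbox (walk (psubs t ! i) f k) (f k)"
    by (simp only: walk_g) (simp add: g_def)
qed

lemma progressive_node: "s \<in> nodes t \<Longrightarrow> progressive t \<Longrightarrow> progressive s"
  by (induction rule: nodes.induct) (auto simp: in_set_conv_nth intro: progressive_child)

lemma progressive_walk_tail: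
  assumes "is_branch t f" "progressive (walk t f m)"
  shows "\<exists>\<^sub>\<infinity>k. rbox (walk t f k) (f k)"
proof -
  have "\<exists>\<^sub>\<infinity>k. rbox (walk (walk t f m) (\<lambda>i. f (m + i)) k) (f (m + k))"
    using assms is_branch_walk progressive_def by blast
  then have "\<exists>\<^sub>\<infinity>k. rbox (walk t f (m + k)) (f (m + k))"
    by (simp only: walk_add)
  then have "\<exists>\<^sub>\<infinity>k. rbox (walk t f (k + m)) (f (k + m))"
    by (simp add: add.commute)
  then show ?thesis
    by (simp only: INFM_nat_shift[of "\<lambda>k. rbox (walk t f k) (f k)" m])
qed

definition right_box_premise :: "rl \<Rightarrow> nat \<Rightarrow> bool" where
  "right_box_premise r i \<longleftrightarrow> (\<exists>Pi A. r = RBox Pi A) \<and> i = 1"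

lemma rbox_iff: "rbox t i \<longleftrightarrow> right_box_premise (prule t) i"
  by (simp add: rbox_def right_box_premise_def)

text \<open>invert tr P j realises the transformation tr, where P recognises the rule introducing the
  inverted formula and j is the index of its premise that is kept; invert_tree is the same
  without the check at the root.\<close>

primcorec invert_tree :: "(sequent \<Rightarrow> sequent) \<Rightarrow> (rl \<Rightarrow> bool) \<Rightarrow> nat \<Rightarrow> ptree \<Rightarrow> ptree" where
  "invert_tree tr P j t = PNode (tr (pseq t)) (prule t)
     (map (\<lambda>(i, c). if right_box_premise (prule t) i then c
                    else if P (prule c) \<and> j < length (psubs c) then psubs c ! j
                    else invert_tree tr P j c)
       (zip [0..<length (psubs t)] (psubs t)))"

definition invert :: "(sequent \<Rightarrow> sequent) \<Rightarrow> (rl \<Rightarrow> bool) \<Rightarrow> nat \<Rightarrow> ptree \<Rightarrow> ptree" where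
  "invert tr P j t =
     (if P (prule t) \<and> j < length (psubs t) then psubs t ! j else invert_tree tr P j t)"

lemma invert_nonprincipal:
  "\<not> (P (prule t) \<and> j < length (psubs t)) \<Longrightarrow> invert tr P j t = invert_tree tr P j t"
  unfolding invert_def by (rule if_not_P)

declare invert_tree.sel [simp del]

lemma invert_tree_sel [simp]:
  "pseq (invert_tree tr P j t) = tr (pseq t)"
  "prule (invert_tree tr P j t) = prule t"
  "length (psubs (invert_tree tr P j t)) = length (psubs t)"
  "i < length (psubs t) \<Longrightarrow> psubs (invert_tree tr P j t) ! i =
     (if right_box_premise (prule t) i then psubs t ! i else invert tr P j (psubs t ! i))"
  by (auto simp: invert_def invert_tree.sel)

locale inversion =
  fixes tr :: "sequent \<Rightarrow> sequent" and P :: "rl \<Rightarrow> bool" and j :: nat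
    and applicable :: "sequent \<Rightarrow> bool"
  assumes principal_not_right_box: "P r \<Longrightarrow> \<not> right_box_premise r j"
    and principal_premise:
      "step S r ss \<Longrightarrow> applicable S \<Longrightarrow> P r \<Longrightarrow> j < length ss \<and> ss ! j = tr S"
    and step_transform: "step S r ss \<Longrightarrow> applicable S \<Longrightarrow> \<not> P r \<Longrightarrow>
       step (tr S) r (map (\<lambda>i. if right_box_premise r i then ss ! i else tr (ss ! i)) [0..<length ss])"
    and applicable_premise: "step S r ss \<Longrightarrow> applicable S \<Longrightarrow> \<not> P r \<Longrightarrow> i < length ss \<Longrightarrow>
       \<not> right_box_premise r i \<Longrightarrow> applicable (ss ! i)"
begin

abbreviation u :: "ptree \<Rightarrow> ptree" where "u \<equiv> invert tr P j"
abbreviation u_tree :: "ptree \<Rightarrow> ptree" where "u_tree \<equiv> invert_tree tr P j"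

lemma invert_cases:
  obtains (principal) "P (prule t)" "j < length (psubs t)" "\<not> rbox t j" "u t = psubs t ! j"
  | (copy) "\<not> (P (prule t) \<and> j < length (psubs t))" "u t = u_tree t"
  using principal_not_right_box
  by (cases "P (prule t) \<and> j < length (psubs t)") (auto simp: invert_def rbox_iff)

lemma not_principal:
  "locally_correct t \<Longrightarrow> applicable (pseq t) \<Longrightarrow> \<not> (P (prule t) \<and> j < length (psubs t)) \<Longrightarrow>
   \<not> P (prule t)"
  using principal_premise[OF locally_correct_step] by force

lemma pseq_invert:
  assumes "locally_correct t" "applicable (pseq t)"
  shows "pseq (u t) = tr (pseq t)"
  using principal_premise[OF locally_correct_step[OF assms(1)] assms(2)]
  by (cases t rule: invert_cases) auto

lemma applicable_child:
  "locally_correct t \<Longrightarrow> applicable (pseq t) \<Longrightarrow> \<not> P (prule t) \<Longrightarrow> i < length (psubs t) \<Longrightarrow>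
   \<not> right_box_premise (prule t) i \<Longrightarrow> applicable (pseq (psubs t ! i))"
  using applicable_premise[OF locally_correct_step] by force

lemma step_invert_tree:
  assumes "locally_correct t" "applicable (pseq t)" "\<not> P (prule t)"
  shows "step (pseq (u_tree t)) (prule (u_tree t)) (map pseq (psubs (u_tree t)))"
proof -
  let ?ss = "map pseq (psubs t)"
  have "map pseq (psubs (u_tree t)) =
      map (\<lambda>i. if right_box_premise (prule t) i then ?ss ! i else tr (?ss ! i)) [0..<length ?ss]"
  proof (rule nth_equalityI)
    fix i assume "i < length (map pseq (psubs (u_tree t)))"
    then have i: "i < length (psubs t)" by simp
    show "map pseq (psubs (u_tree t)) ! i =
        map (\<lambda>i. if right_box_premise (prule t) i then ?ss ! i else tr (?ss ! i)) [0..<length ?ss] ! i"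
    proof (cases "right_box_premise (prule t) i")
      case False
      have "locally_correct (psubs t ! i)"
        using assms(1) i child_in_nodes locally_correct_node by blast
      moreover have "applicable (pseq (psubs t ! i))"
        using applicable_child assms i False by blast
      ultimately show ?thesis using i False by (simp add: pseq_invert)
    qed (use i in simp)
  qed simp
  then show ?thesis
    using step_transform[OF locally_correct_step[OF assms(1)] assms(2,3)] by simp
qed

lemma nodes_invert:
  assumes "x \<in> nodes (u t)" "locally_correct t" "applicable (pseq t)"
  shows "x \<in> nodes t \<or> (\<exists>s\<in>nodes t. applicable (pseq s) \<and> \<not> P (prule s) \<and> x = u_tree s)"
  using assms(1)
proof (induction rule: nodes.induct)
  case 1
  show ?case
    using not_principal[OF assms(2,3)] assms(3) child_in_nodes nodes.intros(1)[of t]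
    by (cases t rule: invert_cases) auto
next
  case (2 s x)
  from 2(2) obtain i where i: "i < length (psubs s)" "x = psubs s ! i"
    by (auto simp: in_set_conv_nth)
  from 2(3) show ?case
  proof
    assume "s \<in> nodes t"
    then show ?thesis using 2(2) nodes.intros(2) by blast
  next
    assume "\<exists>s'\<in>nodes t. applicable (pseq s') \<and> \<not> P (prule s') \<and> s = u_tree s'"
    then obtain s' where s': "s' \<in> nodes t" "applicable (pseq s')" "\<not> P (prule s')" "s = u_tree s'"
      by blast
    have i': "i < length (psubs s')" using i s' by simp
    let ?c = "psubs s' ! i"
    have c_node: "?c \<in> nodes t" using s'(1) i' child_in_nodes nodes_trans by blast
    show ?thesis
    proof (cases "right_box_premise (prule s') i")
      case True
      then show ?thesis using i i' s' c_node by simp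
    next
      case False
      have app: "applicable (pseq ?c)"
        using applicable_child locally_correct_node[OF assms(2) s'(1)] s'(2,3) i' False by blast
      have lc: "locally_correct ?c" using c_node assms(2) locally_correct_node by blast
      have x: "x = u ?c" using i i' s' False by simp
      show ?thesis
      proof (cases ?c rule: invert_cases)
        case principal
        then show ?thesis using x c_node child_in_nodes nodes_trans by metis
      next
        case copy
        then show ?thesis using x c_node not_principal[OF lc app] app by auto
      qed
    qed
  qed
qed

lemma locally_correct_invert:
  assumes "locally_correct t" "applicable (pseq t)"
  shows "locally_correct (u t)"
  unfolding locally_correct_def
proof
  fix x assume "x \<in> nodes (u t)"
  from nodes_invert[OF this assms] show "step (pseq x) (prule x) (map pseq (psubs x))"
    using assms(1) step_invert_tree locally_correct_node locally_correct_def by blast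
qed

lemma invert_agree_principal_iff:
  assumes "agree (Suc m) s s'"
  shows "(P (prule s) \<and> j < length (psubs s)) \<longleftrightarrow> (P (prule s') \<and> j < length (psubs s'))"
  using agree_SucD[OF assms] by simp

lemma pseq_invert_agree:
  assumes "agree (Suc m) s s'"
  shows "pseq (u s) = pseq (u s')"
proof (cases "P (prule s) \<and> j < length (psubs s)")
  case True
  then have "pseq (psubs s ! j) = pseq (psubs s' ! j)"
    using agree_SucD(3)[OF assms] by (metis map_pseq_nth)
  then show ?thesis
    using True invert_agree_principal_iff[OF assms] by (simp add: invert_def)
next
  case False
  then show ?thesis
    using agree_SucD(1)[OF assms] invert_agree_principal_iff[OF assms]
    by (simp only: invert_def if_False invert_tree_sel)
qed

lemma map_pseq_invert_tree_agree:
  assumes "agree (Suc m) s s'"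
  shows "map pseq (psubs (u_tree s)) = map pseq (psubs (u_tree s'))"
proof (rule nth_equalityI)
  note a = agree_SucD[OF assms]
  fix i assume "i < length (map pseq (psubs (u_tree s)))"
  then have i: "i < length (psubs s)" and i': "i < length (psubs s')" using a(4) by simp_all
  show "map pseq (psubs (u_tree s)) ! i = map pseq (psubs (u_tree s')) ! i"
  proof (cases "right_box_premise (prule s) i")
    case True
    then show ?thesis using i i' a(2) map_pseq_nth[OF a(3) i] by simp
  next
    case False
    then have "agree (Suc m) (psubs s ! i) (psubs s' ! i)" using a(5)[OF i] by (simp add: rbox_iff)
    then show ?thesis using i i' a(2) False pseq_invert_agree by simp
  qed
qed (simp add: agree_SucD[OF assms])

lemma agree_invert: "agree n s s' \<Longrightarrow> agree n (u s) (u s')"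
proof (coinduction arbitrary: n s s' rule: agree.coinduct)
  case (agree n s s')
  show ?case
  proof (cases n)
    case (Suc m)
    note agree_s = agree[unfolded Suc]
    note a = agree_SucD[OF agree_s]
    show ?thesis
    proof (cases s rule: invert_cases)
      case principal
      then have us': "u s' = psubs s' ! j"
        using invert_agree_principal_iff[OF agree_s] by (simp add: invert_def)
      have "agree (Suc m) (psubs s ! j) (psubs s' ! j)" using a(5)[of j] principal by simp
      then show ?thesis
        using agree_SucD[of m "psubs s ! j" "psubs s' ! j"] principal(4) us' Suc by auto
    next
      case copy
      then have us: "u s = u_tree s" "u s' = u_tree s'"
        using invert_agree_principal_iff[OF agree_s] by (auto simp: invert_def)
      have "\<forall>i<length (psubs (u_tree s)).
          (\<exists>n c c'. (if rbox (u_tree s) i then m else Suc m) = n \<and> psubs (u_tree s) ! i = u c \<and>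
             psubs (u_tree s') ! i = u c' \<and> agree n c c') \<or>
          agree (if rbox (u_tree s) i then m else Suc m) (psubs (u_tree s) ! i) (psubs (u_tree s') ! i)"
        (is "\<forall>i<_. ?child i")
      proof (intro allI impI)
        fix i assume "i < length (psubs (u_tree s))"
        then have i: "i < length (psubs s)" by simp
        show "?child i"
        proof (cases "right_box_premise (prule s) i")
          case True
          then show ?thesis using a(5)[OF i] i a(2,4) by (simp add: rbox_iff)
        next
          case False
          then have "agree (Suc m) (psubs s ! i) (psubs s' ! i)" using a(5)[OF i] by (simp add: rbox_iff)
          then show ?thesis using False i a(2,4) by (auto simp: rbox_iff)
        qed
      qed
      then show ?thesis
        using us map_pseq_invert_tree_agree[OF agree_s] a(1,2) Suc by auto
    qed
  qed simp
qed

lemma walk_invert: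
  assumes branch: "is_branch (u t) f"
    and stays: "\<forall>k'<k. \<not> (P (prule (walk t f k')) \<and> j < length (psubs (walk t f k'))) \<and>
                 \<not> rbox (walk t f k') (f k')"
  shows "walk (u t) f k = u (walk t f k) \<and> (\<forall>k'<k. f k' < length (psubs (walk t f k')))"
  using stays
proof (induction k)
  case (Suc k)
  then have IH: "walk (u t) f k = u (walk t f k)" "\<forall>k'<k. f k' < length (psubs (walk t f k'))"
    by auto
  let ?w = "walk t f k"
  have st: "\<not> (P (prule ?w) \<and> j < length (psubs ?w))" "\<not> right_box_premise (prule ?w) (f k)"
    using Suc.prems by (auto simp: rbox_iff)
  have uw: "u ?w = u_tree ?w" using st(1) by (rule invert_nonprincipal)
  have fk: "f k < length (psubs ?w)"
    using branch IH uw unfolding is_branch_def by (metis invert_tree_sel(3))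
  have "walk (u t) f (Suc k) = psubs (u_tree ?w) ! f k" using IH uw by simp
  also have "\<dots> = u (walk t f (Suc k))" using fk st by simp
  finally show ?case using IH fk less_Suc_eq by auto
qed simp

lemma progressive_invert:
  assumes "progressive t"
  shows "progressive (u t)"
  unfolding progressive_def
proof (intro allI impI)
  fix f assume branch: "is_branch (u t) f"
  define stays where "stays k \<longleftrightarrow> \<not> (P (prule (walk t f k)) \<and> j < length (psubs (walk t f k))) \<and>
      \<not> rbox (walk t f k) (f k)" for k
  have from_node: "walk (u t) f M \<in> nodes t \<Longrightarrow> \<exists>\<^sub>\<infinity>k. rbox (walk (u t) f k) (f k)" for M
    using progressive_walk_tail[OF branch] progressive_node assms by blast
  show "\<exists>\<^sub>\<infinity>k. rbox (walk (u t) f k) (f k)"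
  proof (cases "\<forall>k. stays k")
    case True
    \<comment> \<open>then f is also a branch of t that never passes a right premise of (Box)\<close>
    then have "is_branch t f"
      using walk_invert[OF branch, of "Suc _"] unfolding stays_def is_branch_def by blast
    then obtain k where "rbox (walk t f k) (f k)"
      using assms progressive_def INFM_EX by blast
    with True show ?thesis by (simp add: stays_def)
  next
    case False
    define K where "K = (LEAST k. \<not> stays k)"
    have "\<not> stays K" using False K_def by (metis LeastI)
    have "\<forall>k<K. stays k" using K_def not_less_Least by blast
    then have walk_K: "walk (u t) f K = u (walk t f K)" and "walk t f K \<in> nodes t"
      using walk_invert[OF branch, of K] walk_in_nodes unfolding stays_def by blast+
    let ?w = "walk t f K"
    show ?thesis
    proof (cases ?w rule: invert_cases)
      case principal
      then show ?thesis
        using walk_K from_node \<open>?w \<in> nodes t\<close> child_in_nodes nodes_trans by metis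
    next
      case copy
      then have rb: "right_box_premise (prule ?w) (f K)"
        using \<open>\<not> stays K\<close> by (simp add: stays_def rbox_iff)
      have fK: "f K < length (psubs ?w)"
        using branch walk_K copy unfolding is_branch_def by (metis invert_tree_sel(3))
      have "walk (u t) f (Suc K) = psubs ?w ! f K" using walk_K copy fK rb by simp
      then show ?thesis
        using from_node \<open>?w \<in> nodes t\<close> fK child_in_nodes nodes_trans by metis
    qed
  qed
qed

lemma frag_invert:
  assumes "frag n (u t) s"
  shows "\<exists>s'. frag n t s' \<and> prule s' = prule s"
  using assms
proof (induction n "u t" s arbitrary: t rule: frag.induct)
  case (1 n)
  show ?case
    by (cases t rule: invert_cases) (auto intro: frag.intros)
next
  case (2 i n s)
  have "frag (Suc n) (u t) s" using 2(1,2,3) by (rule frag.intros(2))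
  then show ?case
  proof (cases t rule: invert_cases)
    case copy
    then have i: "i < length (psubs t)" "\<not> rbox t i" "psubs (u t) ! i = u (psubs t ! i)"
      using 2(1,2) by (auto simp: rbox_iff)
    then obtain s' where "frag (Suc n) (psubs t ! i) s'" "prule s' = prule s"
      using 2(4) by metis
    then show ?thesis using i frag.intros(2) by blast
  qed (auto intro: frag_nonbox_child)
next
  case (3 i n s)
  have "frag (Suc n) (u t) s" using 3(1,2,3) by (rule frag.intros(3))
  then show ?case
  proof (cases t rule: invert_cases)
    case copy
    then have "rbox t i" "psubs (u t) ! i = psubs t ! i" using 3(1,2) by (auto simp: rbox_iff)
    then show ?thesis using 3 copy by (auto intro: frag.intros(3))
  qed (auto intro: frag_nonbox_child)
qed

lemma mbranch_invert:
  assumes "mbranch (u t) k"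
  shows "mbranch t k"
  using assms
proof (induction "u t" k arbitrary: t rule: mbranch.induct)
  case 1
  show ?case by (rule mbranch.intros(1))
next
  case (2 i k)
  have "mbranch (u t) (Suc k)" using 2(1,2,3) by (rule mbranch.intros(2))
  then show ?case
  proof (cases t rule: invert_cases)
    case copy
    then have i: "i < length (psubs t)" "\<not> rbox t i" "psubs (u t) ! i = u (psubs t ! i)"
      using 2(1,2) by (auto simp: rbox_iff)
    then have "mbranch (psubs t ! i) k" using 2(4) by metis
    then show ?thesis using i mbranch.intros(2) by blast
  qed (auto intro: mbranch_nonbox_child mbranch_Suc_imp)
next
  case (3 i)
  have "mbranch (u t) (Suc 0)" using 3(1,2) by (rule mbranch.intros(3))
  then show ?case
  proof (cases t rule: invert_cases)
    case copy
    then show ?thesis using 3(1,2) by (auto simp: rbox_iff intro: mbranch.intros(3))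
  qed (auto intro: mbranch_nonbox_child mbranch_Suc_imp)
qed

definition inversion_map :: "ptree \<Rightarrow> ptree" where
  "inversion_map t = (if applicable (pseq t) then u t else t)"

lemma agree_inversion_map: "agree n t t' \<Longrightarrow> agree n (inversion_map t) (inversion_map t')"
proof (cases n)
  case (Suc m)
  moreover assume "agree n t t'"
  ultimately show ?thesis
    using agree_invert agree_SucD(1) by (simp add: inversion_map_def)
qed (simp add: agree.intros(1))

lemma Pn_inversion_map:
  assumes "t \<in> Pn n"
  shows "inversion_map t \<in> Pn n"
proof -
  have "\<not> is_cut (prule s)" if "frag n (u t) s" for s
    using frag_invert[OF that] assms by (auto simp: Pn_def)
  then show ?thesis
    using assms locally_correct_invert progressive_invert
    by (auto simp: Pn_def inversion_map_def Proofs_iff)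
qed

lemma local_height_inversion_map: "local_height (inversion_map t) \<le> local_height t"
  unfolding local_height_def inversion_map_def
  by (rule Sup_subset_mono) (auto dest: mbranch_invert)

theorem strongly_admissible_inversion:
  assumes "\<And>p c. (p, c) \<in> R \<Longrightarrow> applicable p \<and> tr p = c"
  shows "strongly_admissible R"
  unfolding strongly_admissible_def
proof (intro exI[of _ inversion_map] conjI)
  show "\<forall>t\<in>Proofs. inversion_map t \<in> Proofs"
    using locally_correct_invert progressive_invert by (simp add: Proofs_iff inversion_map_def)
  show "\<forall>(p, c)\<in>R. \<forall>t\<in>Proofs. pseq t = p \<longrightarrow> pseq (inversion_map t) = c"
    using assms pseq_invert by (auto simp: inversion_map_def Proofs_iff)
qed (use agree_inversion_map Pn_inversion_map local_height_inversion_map in blast)+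

end

lemma mem_diff_single_neq: "a \<noteq> b \<Longrightarrow> a \<in># M - {#b#} \<longleftrightarrow> a \<in># M"
  by (simp add: in_diff_count)

lemma subset_mset_add_mset: "N \<subseteq># M \<Longrightarrow> N \<subseteq># add_mset y M"
  using subset_mset.order_trans[of N M "add_mset y M"] by (simp add: subseteq_mset_def)

lemma subset_mset_diff_single: "N \<subseteq># M \<Longrightarrow> x \<notin># N \<Longrightarrow> N \<subseteq># M - {#x#}"
  by (metis Diff_eq_empty_iff_mset diff_empty insert_DiffM minus_add_mset_if_not_in_lhs)

lemma subset_mset_add_mset_diff_single:
  "N \<subseteq># M \<Longrightarrow> x \<notin># N \<Longrightarrow> N \<subseteq># add_mset y (M - {#x#})"
  by (simp add: subset_mset_add_mset subset_mset_diff_single)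

lemmas inversion_simps =
  mem_diff_single_neq add_mset_commute right_box_premise_def upt_rec less_Suc_eq nth_Cons'

lemma inversion_li_imp:
  "inversion (\<lambda>(L, R). (add_mset B (L - {#Imp A B#}), R)) (\<lambda>r. r = RImpL A B) 0
     (\<lambda>(L, R). Imp A B \<in># L)"
  apply unfold_locales
  subgoal by (simp add: right_box_premise_def)
  subgoal for S r ss by (cases S) auto
  subgoal for S r ss
    by (cases S; cases r) (auto simp: inversion_simps intro!: subset_mset_add_mset_diff_single)
  subgoal for S r ss i
    by (cases S; cases r) (auto simp: inversion_simps)
  done

lemma inversion_ri_imp:
  "inversion (\<lambda>(L, R). (L - {#Imp A B#}, add_mset A R)) (\<lambda>r. r = RImpL A B) 1
     (\<lambda>(L, R). Imp A B \<in># L)"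
  apply unfold_locales
  subgoal by (simp add: right_box_premise_def)
  subgoal for S r ss by (cases S) auto
  subgoal for S r ss
    by (cases S; cases r) (auto simp: inversion_simps intro!: subset_mset_diff_single)
  subgoal for S r ss i
    by (cases S; cases r) (auto simp: inversion_simps)
  done

lemma inversion_i_imp:
  "inversion (\<lambda>(L, R). (add_mset A L, add_mset B (R - {#Imp A B#}))) (\<lambda>r. r = RImpR A B) 0
     (\<lambda>(L, R). Imp A B \<in># R)"
  apply unfold_locales
  subgoal by (simp add: right_box_premise_def)
  subgoal for S r ss by (cases S) auto
  subgoal for S r ss
    by (cases S; cases r) (auto simp: inversion_simps intro!: subset_mset_add_mset)
  subgoal for S r ss i
    by (cases S; cases r) (auto simp: inversion_simps)
  done

text \<open>No rule introduces Bot on the right, so there is no principal case.\<close>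

lemma inversion_i_bot:
  "inversion (\<lambda>(L, R). (L, R - {#Bot#})) (\<lambda>r. False) 0 (\<lambda>(L, R). Bot \<in># R)"
  apply unfold_locales
  subgoal by simp
  subgoal by simp
  subgoal for S r ss
    by (cases S; cases r) (auto simp: inversion_simps intro!: subset_mset_add_mset_diff_single)
  subgoal for S r ss i
    by (cases S; cases r) (auto simp: inversion_simps)
  done

lemma inversion_li_box:
  "inversion (\<lambda>(L, R). (L, add_mset A (R - {#Box A#}))) (\<lambda>r. \<exists>Pi. r = RBox Pi A) 0
     (\<lambda>(L, R). Box A \<in># R)"
  apply unfold_locales
  subgoal by (auto simp: right_box_premise_def)
  subgoal for S r ss by (cases S) auto
  subgoal for S r ss
    by (cases S; cases r) (auto simp: inversion_simps intro!: subset_mset_add_mset_diff_single)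
  subgoal for S r ss i
    by (cases S; cases r) (auto simp: inversion_simps)
  done

theorem lemma5p2:
  fixes A B :: fm
  shows "strongly_admissible (li_imp A B) \<and> strongly_admissible (ri_imp A B) \<and>
         strongly_admissible (i_imp A B) \<and> strongly_admissible i_bot \<and>
         strongly_admissible (li_box A)"
proof (intro conjI)
  show "strongly_admissible (li_imp A B)"
    by (rule inversion.strongly_admissible_inversion[OF inversion_li_imp]) (auto simp: li_imp_def)
  show "strongly_admissible (ri_imp A B)"
    by (rule inversion.strongly_admissible_inversion[OF inversion_ri_imp]) (auto simp: ri_imp_def)
  show "strongly_admissible (i_imp A B)"
    by (rule inversion.strongly_admissible_inversion[OF inversion_i_imp]) (auto simp: i_imp_def)
  show "strongly_admissible i_bot"
    by (rule inversion.strongly_admissible_inversion[OF inversion_i_bot]) (auto simp: i_bot_def)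
  show "strongly_admissible (li_box A)"
    by (rule inversion.strongly_admissible_inversion[OF inversion_li_box]) (auto simp: li_box_def)
qed

end
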